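(* Let $G=(\mathcal V,\mathcal E)$ be a connected non-bipartite graph and consider the general stochastic matching model on $G$ with i.i.d. arrivals of law $\mu$ (with full support on $\mathcal V$) under the First Come, First Matched (FCFM) policy. Then the queue-detail Markov chain $(W_n)_{n\ge 0}$ is positive recurrent if and only if $\mu\in\textsc{Ncond}(G)$. In that case the unique stationary probability of $(W_n)$ is $$\Pi_W(w)=\alpha\prod_{\ell=1}^{q}\frac{\mu(w_\ell)}{\mu\big(\mathcal E(\{w_1,\dots,w_\ell\})\big)},\qquad w=w_1\cdots w_q\in\mathbb W$$ (with $\Pi_W(\emptyset)=\alpha$), where $\alpha>0$ is the normalizing constant making $\Pi_W$ a probability measure on $\mathbb W$.
   Context: $G=(\mathcal V,\mathcal E)$ is a finite connected simple graph, $\mathcal V=\{1,\dots,|\mathcal V|\}$; write $u - v$ if $\{u,v\}\in\mathcal E$. For $U\subset\mathcal V$, $\mathcal E(U)=\{v\in\mathcal V:\exists u\in U,\ u - v\}$. An independent set is a nonempty set of pairwise non-adjacent nodes; $\mathbb I(G)$ is the set of independent sets. $\textsc{Ncond}(G)$ is the set of probability measures $\mu$ on $\mathcal V$ with full support such that $\mu(\mathcal I)<\mu(\mathcal E(\mathcal I))$ for every $\mathcal I\in\mathbb I(G)$. Model: items arrive one at a time at times $n=1,2,\dots$; the classes $V_1,V_2,\dots$ are i.i.d. with law $\mu$. An arriving item of class $i$ is matched with an item present in the buffer whose class $j$ satisfies $i - j$, if there is one (and both items leave); otherwise it is stored in the buffer. Under FCFM the arriving item is matched with the oldest (earliest arrived)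 compatible item present. The queue detail $W_n\in\mathcal V^*$ is the word formed by the classes of the unmatched items present after the $n$-th arrival, in order of arrival, with $W_0=\emptyset$; it is a Markov chain with values in $\mathbb W=\{w\in\mathcal V^*:\ |w|_i|w|_j=0\ \text{for all } i - j\}$, where $|w|_i$ is the number of occurrences of letter $i$ in $w$. *)

theory Defs
  imports "HOL-Probability.Probability"
begin

definition simple_graph :: "nat \<Rightarrow> (nat \<Rightarrow> nat \<Rightarrow> bool) \<Rightarrow> bool" where
  "simple_graph N E \<longleftrightarrow> (\<forall>u v. E u v \<longrightarrow> u \<in> {1..N} \<and> v \<in> {1..N} \<and> E v u \<and> u \<noteq> v)"

definition connected_graph :: "nat \<Rightarrow> (nat \<Rightarrow> nat \<Rightarrow> bool) \<Rightarrow> bool" where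
  "connected_graph N E \<longleftrightarrow> (\<forall>u\<in>{1..N}. \<forall>v\<in>{1..N}. E\<^sup>*\<^sup>* u v)"

definition bipartite :: "nat \<Rightarrow> (nat \<Rightarrow> nat \<Rightarrow> bool) \<Rightarrow> bool" where
  "bipartite N E \<longleftrightarrow> (\<exists>A \<subseteq> {1..N}. \<forall>u v. E u v \<longrightarrow> (u \<in> A \<longleftrightarrow> v \<notin> A))"

definition nbh :: "nat \<Rightarrow> (nat \<Rightarrow> nat \<Rightarrow> bool) \<Rightarrow> nat set \<Rightarrow> nat set" where
  "nbh N E U = {v \<in> {1..N}. \<exists>u\<in>U. E u v}"

definition indep_sets :: "nat \<Rightarrow> (nat \<Rightarrow> nat \<Rightarrow> bool) \<Rightarrow> nat set set" where
  "indep_sets N E = {I. I \<subseteq> {1..N} \<and> I \<noteq> {} \<and> (\<forall>u\<in>I. \<forall>v\<in>I. \<not> E u v)}"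

definition Ncond :: "nat \<Rightarrow> (nat \<Rightarrow> nat \<Rightarrow> bool) \<Rightarrow> nat pmf set" where
  "Ncond N E = {\<mu>. set_pmf \<mu> = {1..N} \<and>
      (\<forall>I \<in> indep_sets N E. measure_pmf.prob \<mu> I < measure_pmf.prob \<mu> (nbh N E I))}"

text \<open>FCFM update of the queue detail (oldest item first) upon arrival of class i.\<close>
fun fcfm_step :: "(nat \<Rightarrow> nat \<Rightarrow> bool) \<Rightarrow> nat list \<Rightarrow> nat \<Rightarrow> nat list" where
  "fcfm_step E [] i = [i]"
| "fcfm_step E (x # w) i = (if E i x then w else x # fcfm_step E w i)"

definition queue_after :: "(nat \<Rightarrow> nat \<Rightarrow> bool) \<Rightarrow> nat list \<Rightarrow> nat list" where
  "queue_after E vs = foldl (fcfm_step E) [] vs"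

definition admissible_words :: "nat \<Rightarrow> (nat \<Rightarrow> nat \<Rightarrow> bool) \<Rightarrow> nat list set" where
  "admissible_words N E = {w. set w \<subseteq> {1..N} \<and>
      (\<forall>i j. E i j \<longrightarrow> count_list w i * count_list w j = 0)}"

definition trans_prob :: "nat \<Rightarrow> (nat \<Rightarrow> nat \<Rightarrow> bool) \<Rightarrow> nat pmf \<Rightarrow> nat list \<Rightarrow> nat list \<Rightarrow> real" where
  "trans_prob N E \<mu> w w' = (\<Sum>i\<in>{1..N}. if fcfm_step E w i = w' then pmf \<mu> i else 0)"

definition first_return_prob :: "nat \<Rightarrow> (nat \<Rightarrow> nat \<Rightarrow> bool) \<Rightarrow> nat pmf \<Rightarrow> nat \<Rightarrow> real" where
  "first_return_prob N E \<mu> n =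
     (\<Sum>vs \<in> {vs. length vs = n \<and> set vs \<subseteq> {1..N}}.
        if queue_after E vs = [] \<and> (\<forall>k. 0 < k \<and> k < n \<longrightarrow> queue_after E (take k vs) \<noteq> [])
        then (\<Prod>v\<leftarrow>vs. pmf \<mu> v) else 0)"

text \<open>Positive recurrence (of the state \<emptyset>, from which the chain starts): the return time
  to \<emptyset> is almost surely finite and has finite expectation.\<close>
definition positive_recurrent :: "nat \<Rightarrow> (nat \<Rightarrow> nat \<Rightarrow> bool) \<Rightarrow> nat pmf \<Rightarrow> bool" where
  "positive_recurrent N E \<mu> \<longleftrightarrow>
     (\<lambda>n. first_return_prob N E \<mu> (Suc n)) sums 1 \<and>
     summable (\<lambda>n. real (Suc n) * first_return_prob N E \<mu> (Suc n))"

definition stationary_prob :: "nat \<Rightarrow> (nat \<Rightarrow> nat \<Rightarrow> bool) \<Rightarrow> nat pmf \<Rightarrow> (nat list \<Rightarrow> real) \<Rightarrow> bool" where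
  "stationary_prob N E \<mu> p \<longleftrightarrow>
     (\<forall>w \<in> admissible_words N E. p w \<ge> 0) \<and>
     (p has_sum 1) (admissible_words N E) \<and>
     (\<forall>w' \<in> admissible_words N E.
        ((\<lambda>w. p w * trans_prob N E \<mu> w w') has_sum p w') (admissible_words N E))"

definition Pi_W :: "nat \<Rightarrow> (nat \<Rightarrow> nat \<Rightarrow> bool) \<Rightarrow> nat pmf \<Rightarrow> real \<Rightarrow> nat list \<Rightarrow> real" where
  "Pi_W N E \<mu> \<alpha> w = \<alpha> * (\<Prod>l<length w.
      pmf \<mu> (w ! l) / measure_pmf.prob \<mu> (nbh N E (set (take (Suc l) w))))"

end

theory Submission
  imports Defs
begin

text \<open>The product-form weight \<open>\<pi>(w) = \<Prod>\<^sub>l \<mu>(w\<^sub>l) / \<mu>(\<E>({w\<^sub>1,\<dots>,w\<^sub>l}))\<close> satisfies the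
  global balance equations of the FCFM chain: a word \<open>y\<close> is reached either from \<open>y\<close> without
  its last letter, which arrived unmatched, or from \<open>y\<close> with some letter \<open>j\<close> inserted at a
  position \<open>k\<close>, which the arrival then matched; summing over \<open>k\<close> telescopes.

  Every nonnegative solution \<open>\<lambda>\<close> of the balance equations with \<open>\<lambda>(\<emptyset>) = 1\<close>
  dominates the expected number of visits per excursion from \<open>\<emptyset>\<close>, and under recurrence the
  difference of the two is again a solution, vanishing at \<open>\<emptyset>\<close> and hence everywhere because
  every nonempty word can step to its tail. Thus the chain is positive recurrent iff
  \<open>\<Sum>\<^sub>w \<pi>(w) < \<infinity>\<close>, and then \<open>\<pi>\<close> is, up to normalisation, the only stationary measure.

  Finally \<open>\<pi>\<close> is summable iff \<open>\<mu> \<in> Ncond(G)\<close>: if \<open>\<mu>(I) \<ge> \<mu>(\<E>(I))\<close> for an independent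
  set \<open>I\<close>, the words over \<open>I\<close> of each length carry weight bounded below; otherwise the
  partial sums over words whose letters extend a set \<open>S\<close> are bounded by induction on the
  number of classes outside \<open>S\<close>, letters in \<open>S\<close> contributing the ratio
  \<open>\<mu>(S)/\<mu>(\<E>(S)) < 1\<close> of a geometric series.\<close>

lemma fcfm_step_unmatched: "\<forall>z\<in>set w. \<not> E i z \<Longrightarrow> fcfm_step E w i = w @ [i]"
  by (induction w) auto

lemma fcfm_step_matched: "\<forall>z\<in>set p. \<not> E i z \<Longrightarrow> E i a \<Longrightarrow> fcfm_step E (p @ a # s) i = p @ s"
  by (induction p) auto

lemma fcfm_step_cases:
  obtains "\<forall>z\<in>set w. \<not> E i z" "fcfm_step E w i = w @ [i]"
  | p a s where "w = p @ a # s" "E i a" "\<forall>z\<in>set p. \<not> E i z" "fcfm_step E w i = p @ s"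
proof (cases "\<exists>z\<in>set w. E i z")
  case True
  then obtain p a s where "w = p @ a # s" "E i a" "\<forall>z\<in>set p. \<not> E i z"
    using split_list_first_propE[of w "E i"] by metis
  with that(2) show thesis by (simp add: fcfm_step_matched)
next
  case False
  with that(1) show thesis by (simp add: fcfm_step_unmatched)
qed

lemma length_fcfm_step:
  "length (fcfm_step E w i) = Suc (length w) \<or> length w = Suc (length (fcfm_step E w i))"
  by (cases rule: fcfm_step_cases[of w E i]) auto

lemma admissible_words_iff:
  "w \<in> admissible_words N E \<longleftrightarrow> set w \<subseteq> {1..N} \<and> (\<forall>a\<in>set w. \<forall>b\<in>set w. \<not> E a b)"
  unfolding admissible_words_def by (auto simp: count_list_0_iff)

lemma queue_after_Nil: "queue_after E [] = []"
  by (simp add: queue_after_def)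

lemma queue_after_snoc: "queue_after E (vs @ [v]) = fcfm_step E (queue_after E vs) v"
  by (simp add: queue_after_def)

lemma length_queue_after_le: "length (queue_after E vs) \<le> length vs"
proof (induction vs rule: rev_induct)
  case Nil
  then show ?case by (simp add: queue_after_Nil)
next
  case (snoc v vs)
  then show ?case
    using length_fcfm_step[of E "queue_after E vs" v] by (auto simp: queue_after_snoc)
qed

lemma no_isolated_vertex:
  assumes "simple_graph N E" "connected_graph N E" "\<not> bipartite N E" "a \<in> {1..N}"
  shows "\<exists>b. E a b"
proof -
  obtain u v where uv: "E u v"
    using assms(3) unfolding bipartite_def by blast
  then have "u \<in> {1..N}" "v \<in> {1..N}" "u \<noteq> v"
    using assms(1) unfolding simple_graph_def by blast+
  then obtain b where b: "b \<in> {1..N}" "b \<noteq> a" by blast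
  have "E\<^sup>*\<^sup>* a b" using assms(2,4) b unfolding connected_graph_def by blast
  then show ?thesis
    by (rule converse_rtranclpE) (use b in auto)
qed

lemma finite_uniform_bound:
  fixes f :: "'a \<Rightarrow> nat \<Rightarrow> real"
  assumes "finite A" "\<forall>x\<in>A. \<exists>C. \<forall>n. f x n \<le> C"
  shows "\<exists>C. \<forall>x\<in>A. \<forall>n. f x n \<le> C"
  using assms
proof (induction A rule: finite_induct)
  case (insert a A)
  then obtain C C' where "\<forall>x\<in>A. \<forall>n. f x n \<le> C" "\<forall>n. f a n \<le> C'" by auto
  then have "\<forall>x\<in>insert a A. \<forall>n. f x n \<le> max C C'" by (auto intro: max.coboundedI1 max.coboundedI2)
  then show ?case by blast
qed simp

text \<open>Here \<open>f n = P(\<tau> = n)\<close> and \<open>t n = P(\<tau> > n)\<close> for a return time \<open>\<tau>\<close>.\<close>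

locale return_time_tails =
  fixes t f :: "nat \<Rightarrow> real"
  assumes t_0: "t 0 = 1" and t_Suc: "\<And>n. t n = t (Suc n) + f (Suc n)"
    and t_nonneg: "\<And>n. t n \<ge> 0" and f_nonneg: "\<And>n. f (Suc n) \<ge> 0"
begin

lemma partial_sum_eq: "(\<Sum>n<M. f (Suc n)) = 1 - t M"
proof (induction M)
  case (Suc M)
  then show ?case using t_Suc[of M] by simp
qed (simp add: t_0)

lemma partial_mean_eq: "(\<Sum>n<M. real (Suc n) * f (Suc n)) = (\<Sum>n<M. t n) - real M * t M"
proof (induction M)
  case (Suc M)
  have "real (Suc M) * f (Suc M) = real (Suc M) * t M - real (Suc M) * t (Suc M)"
    using t_Suc[of M] by (simp add: algebra_simps)
  then show ?case unfolding sum.lessThan_Suc Suc.IH by (simp add: algebra_simps)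
qed simp

lemma summable_if_finite_mean:
  assumes f_sums: "(\<lambda>n. f (Suc n)) sums 1" and g_sum: "summable (\<lambda>n. real (Suc n) * f (Suc n))"
  shows "summable t"
proof -
  define g where "g n = real (Suc n) * f (Suc n)" for n
  have g_nonneg: "g n \<ge> 0" for n unfolding g_def using f_nonneg by simp
  have f_sum: "summable (\<lambda>n. f (Suc n))" using f_sums by (auto simp: sums_iff)
  have Mt_le: "real M * t M \<le> suminf g" for M
  proof -
    have s1: "summable (\<lambda>k. f (Suc (k + M)))"
      using summable_ignore_initial_segment[OF f_sum, of M] by simp
    have s2: "summable (\<lambda>k. g (k + M))"
      using summable_ignore_initial_segment[OF g_sum, of M] by (simp add: g_def)
    have "t M = (\<Sum>k. f (Suc (k + M)))"
      using suminf_split_initial_segment[OF f_sum, of M] partial_sum_eq[of M] f_sums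
      by (simp add: sums_iff)
    then have "real M * t M = (\<Sum>k. real M * f (Suc (k + M)))"
      using suminf_mult[OF s1, of "real M"] by simp
    also have "\<dots> \<le> (\<Sum>k. g (k + M))"
      by (rule suminf_le)
        (use s1 s2 f_nonneg in \<open>auto simp: g_def intro!: mult_right_mono summable_mult\<close>)
    also have "\<dots> \<le> suminf g"
      using suminf_split_initial_segment[OF g_sum[folded g_def], of M]
        sum_nonneg[of "{..<M}" g] g_nonneg
      by simp
    finally show ?thesis .
  qed
  have partial_le: "(\<Sum>k<Suc n. g k) \<le> suminf g" for n
    using sum_le_suminf[OF g_sum[folded g_def], of "{..<Suc n}"] g_nonneg by auto
  have "sum t {..n} \<le> 2 * suminf g" for n
    using partial_mean_eq[of "Suc n"] Mt_le[of "Suc n"] partial_le[of n]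
    unfolding g_def by (simp add: lessThan_Suc_atMost)
  then show "summable t" by (intro bounded_imp_summable[where B="2 * suminf g"] t_nonneg)
qed

lemma finite_mean_if_summable:
  assumes t_sum: "summable t"
  shows "(\<lambda>n. f (Suc n)) sums 1" "summable (\<lambda>n. real (Suc n) * f (Suc n))"
proof -
  have "(\<lambda>M. \<Sum>n<M. f (Suc n)) \<longlonglongrightarrow> 1 - 0"
    unfolding partial_sum_eq by (intro tendsto_diff tendsto_const summable_LIMSEQ_zero[OF t_sum])
  then show "(\<lambda>n. f (Suc n)) sums 1" by (simp add: sums_def)
  have "sum (\<lambda>n. real (Suc n) * f (Suc n)) {..n} \<le> suminf t" for n
  proof -
    have "sum (\<lambda>n. real (Suc n) * f (Suc n)) {..n} = (\<Sum>k<Suc n. t k) - real (Suc n) * t (Suc n)"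
      using partial_mean_eq[of "Suc n"] by (simp add: lessThan_Suc_atMost)
    also have "\<dots> \<le> (\<Sum>k<Suc n. t k)" using t_nonneg[of "Suc n"] by simp
    also have "\<dots> \<le> suminf t" using sum_le_suminf[OF t_sum, of "{..<Suc n}"] t_nonneg by auto
    finally show ?thesis .
  qed
  then show "summable (\<lambda>n. real (Suc n) * f (Suc n))"
    by (intro bounded_imp_summable[where B="suminf t"]) (simp add: f_nonneg)
qed

lemma finite_mean_iff_summable:
  "((\<lambda>n. f (Suc n)) sums 1 \<and> summable (\<lambda>n. real (Suc n) * f (Suc n))) \<longleftrightarrow> summable t"
  using summable_if_finite_mean finite_mean_if_summable by blast

end

lemma sum_prod_list_lists_length:
  fixes f :: "'a \<Rightarrow> real"
  assumes "finite A"
  shows "(\<Sum>u\<in>{u. set u \<subseteq> A \<and> length u = n}. prod_list (map f u)) = sum f A ^ n"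
proof (induction n)
  case 0
  have "{u. set u \<subseteq> A \<and> length u = 0} = {[]}" by auto
  then show ?case by simp
next
  case (Suc n)
  let ?L = "{u. set u \<subseteq> A \<and> length u = n}"
  have inj: "inj_on (\<lambda>(u, x). x # u) (?L \<times> A)" by (auto simp: inj_on_def)
  have "(\<Sum>u\<in>{u. set u \<subseteq> A \<and> length u = Suc n}. prod_list (map f u))
      = (\<Sum>(u, x)\<in>?L \<times> A. f x * prod_list (map f u))"
    unfolding lists_length_Suc_eq by (subst sum.reindex[OF inj]) (simp add: split_def)
  also have "\<dots> = (\<Sum>u\<in>?L. prod_list (map f u)) * sum f A"
    by (simp add: sum.cartesian_product[symmetric] sum_distrib_left sum_distrib_right mult.commute)
  finally show ?case using Suc by simp
qed

lemma geometric_recursion_bound: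
  fixes z :: "nat \<Rightarrow> real"
  assumes "z 0 \<le> 1" and "\<And>n. z (Suc n) \<le> 1 + r * z n + D"
    and "0 \<le> r" "r < 1" "0 \<le> D"
  shows "z n \<le> (1 + D) / (1 - r)"
proof (induction n)
  case 0
  have "z 0 * (1 - r) \<le> 1 - r" using mult_right_mono[of "z 0" 1 "1 - r"] assms(1,4) by simp
  also have "\<dots> \<le> 1 + D" using assms(3,5) by simp
  finally have "z 0 * (1 - r) \<le> 1 + D" .
  then show ?case using assms(4) by (simp add: le_divide_eq)
next
  case (Suc n)
  have "z (Suc n) \<le> 1 + r * ((1 + D) / (1 - r)) + D"
    using assms(2)[of n] mult_left_mono[OF Suc.IH assms(3)] by linarith
  also have "\<dots> = (1 + D) / (1 - r)" using assms(4) by (simp add: field_simps)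
  finally show ?case .
qed

lemma sum_if_eq_conj:
  "finite Y \<Longrightarrow> (\<Sum>y\<in>Y. if a = y \<and> P then c else 0) = (if a \<in> Y \<and> P then c else 0)"
  by (cases P) (simp_all add: sum.delta)

section \<open>Product-form weights\<close>

locale fcfm_model =
  fixes N :: nat and E :: "nat \<Rightarrow> nat \<Rightarrow> bool" and \<mu> :: "nat pmf"
  assumes simple: "simple_graph N E"
    and support: "set_pmf \<mu> = {1..N}"
    and no_isolated: "\<And>a. a \<in> {1..N} \<Longrightarrow> \<exists>b. E a b"
begin

abbreviation "V \<equiv> {1..N}"
abbreviation "W \<equiv> admissible_words N E"
abbreviation "Pm A \<equiv> measure_pmf.prob \<mu> A"
abbreviation "nb U \<equiv> nbh N E U"
abbreviation "K \<equiv> trans_prob N E \<mu>"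

lemma E_sym: "E u v \<Longrightarrow> E v u"
  using simple unfolding simple_graph_def by blast

lemma E_sym_iff: "E u v \<longleftrightarrow> E v u"
  using E_sym by blast

lemma E_irrefl: "\<not> E u u"
  using simple unfolding simple_graph_def by blast

lemma E_vertices: "E u v \<Longrightarrow> u \<in> V \<and> v \<in> V"
  using simple unfolding simple_graph_def by blast

lemma pmf_pos: "x \<in> V \<Longrightarrow> pmf \<mu> x > 0"
  using support by (metis pmf_nonneg set_pmf_iff order_le_less)

lemma prob_eq_sum_pmf: "A \<subseteq> V \<Longrightarrow> Pm A = sum (pmf \<mu>) A"
  by (rule measure_measure_pmf_finite) (auto intro: finite_subset)

lemma sum_pmf_vertices: "sum (pmf \<mu>) V = 1"
  by (rule sum_pmf_eq_1) (use support in auto)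

lemma nbh_subset: "nb U \<subseteq> V"
  by (auto simp: nbh_def)

lemma nbh_empty: "nb {} = {}"
  by (auto simp: nbh_def)

lemma prob_nbh_pos:
  assumes u: "u \<in> U" "u \<in> V"
  shows "Pm (nb U) > 0"
proof -
  obtain b where b: "E u b" using no_isolated[OF u(2)] by blast
  then have "b \<in> nb U" using u E_vertices[OF b] by (auto simp: nbh_def)
  then have "pmf \<mu> b \<le> sum (pmf \<mu>) (nb U)"
    by (intro member_le_sum) (auto intro: finite_subset[OF nbh_subset])
  moreover have "pmf \<mu> b > 0" using pmf_pos E_vertices[OF b] by blast
  ultimately show ?thesis using prob_eq_sum_pmf[OF nbh_subset] by simp
qed

text \<open>\<open>pform S w\<close> is the product-form weight of \<open>w\<close> when the classes in \<open>S\<close> are already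
  present in front of \<open>w\<close>.\<close>

fun pform :: "nat set \<Rightarrow> nat list \<Rightarrow> real" where
  "pform S [] = 1"
| "pform S (x # w) = pmf \<mu> x / Pm (nb (insert x S)) * pform (insert x S) w"

lemma pform_nonneg: "pform S w \<ge> 0"
  by (induction w arbitrary: S) auto

lemma pform_pos: "set w \<subseteq> V \<Longrightarrow> pform S w > 0"
proof (induction w arbitrary: S)
  case (Cons x w)
  then have "pmf \<mu> x > 0" "Pm (nb (insert x S)) > 0"
    using pmf_pos prob_nbh_pos[of x "insert x S"] by auto
  with Cons show ?case by auto
qed simp

lemma prod_eq_pform:
  "(\<Prod>l<length w. pmf \<mu> (w ! l) / Pm (nb (S \<union> set (take (Suc l) w)))) = pform S w"
proof (induction w arbitrary: S)
  case (Cons x w)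
  have "(\<Prod>l<length (x # w). pmf \<mu> ((x # w) ! l) / Pm (nb (S \<union> set (take (Suc l) (x # w)))))
      = pmf \<mu> x / Pm (nb (insert x S)) *
        (\<Prod>l<length w. pmf \<mu> (w ! l) / Pm (nb (insert x S \<union> set (take (Suc l) w))))"
    unfolding length_Cons prod.lessThan_Suc_shift by (simp add: insert_commute)
  then show ?case by (simp only: Cons.IH pform.simps)
qed simp

lemma Pi_W_eq_pform: "Pi_W N E \<mu> \<alpha> w = \<alpha> * pform {} w"
  using prod_eq_pform[of w "{}"] by (simp add: Pi_W_def)

lemma pform_snoc: "pform S (w @ [x]) = pform S w * pmf \<mu> x / Pm (nb (insert x (S \<union> set w)))"
  by (induction w arbitrary: S) (auto simp: insert_commute)

lemma pform_append: "pform S (p @ u) = pform S p * pform (S \<union> set p) u"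
  by (induction p arbitrary: S) auto

lemma pform_const: "set u \<subseteq> S \<Longrightarrow> pform S u = prod_list (map (pmf \<mu>) u) / Pm (nb S) ^ length u"
  by (induction u) (auto simp: insert_absorb)

definition insert_at :: "nat \<Rightarrow> nat \<Rightarrow> nat list \<Rightarrow> nat list" where
  "insert_at k j v = take k v @ j # drop k v"

lemma insert_at_0 [simp]: "insert_at 0 j v = j # v"
  by (simp add: insert_at_def)

lemma insert_at_Suc_Cons [simp]: "insert_at (Suc k) j (y # v) = y # insert_at k j v"
  by (simp add: insert_at_def)

lemma set_insert_at: "set (insert_at k j v) = insert j (set v)"
proof -
  have "set v = set (take k v) \<union> set (drop k v)" by (metis append_take_drop_id set_append)
  then show ?thesis by (auto simp: insert_at_def)
qed

lemma length_insert_at: "k \<le> length v \<Longrightarrow> length (insert_at k j v) = Suc (length v)"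
  by (simp add: insert_at_def)

definition match_mass :: "nat \<Rightarrow> nat set \<Rightarrow> real" where
  "match_mass j X = Pm (nb (insert j X)) - Pm (nb X)"

lemma sum_pform_insert_at:
  assumes "j \<in> V" "set v \<subseteq> V"
  shows "(\<Sum>k\<le>length v. pform S (insert_at k j v) * match_mass j (S \<union> set (take k v)))
         = pmf \<mu> j * (pform S v - Pm (nb S) / Pm (nb (insert j S)) * pform (insert j S) v)"
  using assms(2)
proof (induction v arbitrary: S)
  case Nil
  have "Pm (nb (insert j S)) > 0" using prob_nbh_pos[of j "insert j S"] assms(1) by auto
  then show ?case by (simp add: match_mass_def field_simps)
next
  case (Cons y v)
  have yV: "y \<in> V" and vV: "set v \<subseteq> V" using Cons.prems by auto
  define a b c d where "a = Pm (nb S)" and "b = Pm (nb (insert j S))"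
    and "c = Pm (nb (insert y S))" and "d = Pm (nb (insert y (insert j S)))"
  define P1 P2 where "P1 = pform (insert y S) v" and "P2 = pform (insert y (insert j S)) v"
  have pos: "b > 0" "c > 0" "d > 0"
    unfolding b_def c_def d_def using assms(1) yV prob_nbh_pos[of j "insert j S"]
      prob_nbh_pos[of y "insert y S"] prob_nbh_pos[of y "insert y (insert j S)"] by auto
  have "(\<Sum>k\<le>length (y # v).
        pform S (insert_at k j (y # v)) * match_mass j (S \<union> set (take k (y # v))))
      = pmf \<mu> j / b * (pmf \<mu> y / d * P2) * (b - a) + pmf \<mu> y / c *
        (\<Sum>k\<le>length v.
          pform (insert y S) (insert_at k j v) * match_mass j (insert y S \<union> set (take k v)))"
    unfolding length_Cons sum.atMost_Suc_shift
    by (simp add: a_def b_def c_def d_def P2_def match_mass_def sum_distrib_left insert_commute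
        mult.assoc
        del: sum.atMost_Suc)
  also have "(\<Sum>k\<le>length v.
        pform (insert y S) (insert_at k j v) * match_mass j (insert y S \<union> set (take k v)))
      = pmf \<mu> j * (P1 - c / d * P2)"
    using Cons.IH[OF vV, of "insert y S"] unfolding P1_def P2_def c_def d_def
    by (simp add: insert_commute)
  finally have L: "(\<Sum>k\<le>length (y # v).
        pform S (insert_at k j (y # v)) * match_mass j (S \<union> set (take k (y # v))))
      = pmf \<mu> j / b * (pmf \<mu> y / d * P2) * (b - a) + pmf \<mu> y / c * (pmf \<mu> j * (P1 - c / d * P2))" .
  have R: "pform S (y # v) - Pm (nb S) / Pm (nb (insert j S)) * pform (insert j S) (y # v)
      = pmf \<mu> y / c * P1 - a / b * (pmf \<mu> y / d * P2)"
    unfolding a_def b_def c_def d_def P1_def P2_def by (simp add: insert_commute)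
  show ?case unfolding L R using pos by (simp add: field_simps)
qed

section \<open>Global balance\<close>

definition adjacent_words :: "nat list \<Rightarrow> nat list set" where
  "adjacent_words y = {x \<in> W. length x = Suc (length y) \<or> length y = Suc (length x)}"

lemma finite_admissible_words_length_le: "finite {x \<in> W. length x \<le> L}"
  by (rule finite_subset[OF _ finite_lists_length_le[of V L]]) (auto simp: admissible_words_iff)

lemma finite_adjacent_words: "finite (adjacent_words y)"
  by (rule finite_subset[OF _ finite_admissible_words_length_le[of "Suc (length y)"]])
    (auto simp: adjacent_words_def)

lemma trans_prob_nonneg: "K x y \<ge> 0"
  unfolding trans_prob_def by (rule sum_nonneg) auto

lemma trans_prob_eq_0: "x \<in> W \<Longrightarrow> x \<notin> adjacent_words y \<Longrightarrow> K x y = 0"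
  unfolding trans_prob_def adjacent_words_def
  by (rule sum.neutral) (use length_fcfm_step[of E x] in auto)

lemma fcfm_step_admissible: "x \<in> W \<Longrightarrow> i \<in> V \<Longrightarrow> fcfm_step E x i \<in> W"
  by (cases rule: fcfm_step_cases[of x E i]) (auto simp: admissible_words_iff E_sym_iff E_irrefl)

lemma trans_prob_Cons_pos:
  assumes "a # x \<in> W"
  shows "K (a # x) x > 0"
proof -
  have "a \<in> V" using assms by (simp add: admissible_words_iff)
  then obtain b where b: "E a b" using no_isolated by blast
  have bV: "b \<in> V" using E_vertices[OF b] by blast
  have "pmf \<mu> b \<le> K (a # x) x"
    unfolding trans_prob_def using bV E_sym[OF b]
    by (intro member_le_sum[where i=b, THEN order_trans[rotated]]) auto
  moreover have "pmf \<mu> b > 0" using pmf_pos bV by blast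
  ultimately show ?thesis by linarith
qed

text \<open>The classes \<open>i\<close> that, arriving to \<open>y\<close> with \<open>j\<close> inserted at position \<open>k\<close>, are matched
  with this \<open>j\<close>.\<close>

definition matchers :: "nat list \<Rightarrow> nat \<Rightarrow> nat \<Rightarrow> nat set" where
  "matchers y j k = {i \<in> V. E i j \<and> (\<forall>z\<in>set (take k y). \<not> E i z)}"

definition insertion_preds :: "nat list \<Rightarrow> (nat \<times> nat \<times> nat) set" where
  "insertion_preds y = (SIGMA j:V - nb (set y). SIGMA k:{..length y}. matchers y j k)"

lemma sum_pmf_matchers: "sum (pmf \<mu>) (matchers y j k) = match_mass j (set (take k y))"
proof -
  have "matchers y j k = nb (insert j (set (take k y))) - nb (set (take k y))"
    unfolding matchers_def nbh_def by (auto simp: E_sym_iff)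
  moreover have "nb (set (take k y)) \<subseteq> nb (insert j (set (take k y)))"
    by (auto simp: nbh_def)
  ultimately show ?thesis
    using sum_diff[OF finite_subset[OF nbh_subset]] prob_eq_sum_pmf[OF nbh_subset]
    by (simp add: match_mass_def)
qed

lemma unmatched_pred:
  assumes "y \<in> W" "y \<noteq> []"
  shows "butlast y \<in> adjacent_words y" "last y \<in> V" "fcfm_step E (butlast y) (last y) = y"
proof -
  show "butlast y \<in> adjacent_words y"
    using assms by (auto simp: adjacent_words_def admissible_words_iff dest: in_set_butlastD)
  show "last y \<in> V" using assms last_in_set by (fastforce simp: admissible_words_iff)
  have "\<forall>z\<in>set (butlast y). \<not> E (last y) z"
    using assms by (auto simp: admissible_words_iff dest: in_set_butlastD)
  then show "fcfm_step E (butlast y) (last y) = y"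
    using fcfm_step_unmatched assms(2) by (metis append_butlast_last_id)
qed

lemma insertion_pred:
  assumes "y \<in> W" "(j, k, i) \<in> insertion_preds y"
  shows "insert_at k j y \<in> adjacent_words y" "i \<in> V" "fcfm_step E (insert_at k j y) i = y"
proof -
  have "j \<in> V" "\<forall>u\<in>set y. \<not> E u j" "k \<le> length y"
    using assms by (auto simp: insertion_preds_def nbh_def admissible_words_iff)
  then show "insert_at k j y \<in> adjacent_words y"
    using assms(1) length_insert_at
    by (auto simp: adjacent_words_def admissible_words_iff set_insert_at E_sym_iff E_irrefl)
  show "i \<in> V" using assms(2) by (simp add: insertion_preds_def matchers_def)
  show "fcfm_step E (insert_at k j y) i = y"
    using assms(2) unfolding insert_at_def insertion_preds_def matchers_def
    by (subst fcfm_step_matched) auto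
qed

lemma insertion_pred_position:
  assumes "(j, k, i) \<in> insertion_preds y"
  shows "k = (LEAST m. E i (insert_at k j y ! m))" "j = insert_at k j y ! k"
proof -
  have k: "k \<le> length y" and ij: "E i j" and before: "\<forall>z\<in>set (take k y). \<not> E i z"
    using assms by (auto simp: insertion_preds_def matchers_def)
  show "j = insert_at k j y ! k" using k by (simp add: insert_at_def nth_append)
  show "k = (LEAST m. E i (insert_at k j y ! m))"
  proof (rule Least_equality[symmetric])
    show "E i (insert_at k j y ! k)" using k ij by (simp add: insert_at_def nth_append)
  next
    fix m assume "E i (insert_at k j y ! m)"
    moreover have "\<not> E i (insert_at k j y ! m)" if "m < k"
    proof -
      have "insert_at k j y ! m = take k y ! m" using that k by (simp add: insert_at_def nth_append)
      moreover have "take k y ! m \<in> set (take k y)" using that k by (intro nth_mem) simp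
      ultimately show ?thesis using before by simp
    qed
    ultimately show "k \<le> m" by (meson not_le)
  qed
qed

lemma inj_on_insertion_preds: "inj_on (\<lambda>(j, k, i). (insert_at k j y, i)) (insertion_preds y)"
proof (rule inj_onI)
  fix t t' assume "t \<in> insertion_preds y" "t' \<in> insertion_preds y"
    and "(\<lambda>(j, k, i). (insert_at k j y, i)) t = (\<lambda>(j, k, i). (insert_at k j y, i)) t'"
  moreover obtain j k i j' k' i' where "t = (j, k, i)" "t' = (j', k', i')"
    by (cases t, cases t') auto
  ultimately have mem: "(j, k, i) \<in> insertion_preds y" "(j', k', i) \<in> insertion_preds y"
    and x: "insert_at k j y = insert_at k' j' y" and "i = i'"
    by auto
  have "k = (LEAST m. E i (insert_at k j y ! m))" by (rule insertion_pred_position(1)[OF mem(1)])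
  also have "\<dots> = k'" unfolding x by (rule insertion_pred_position(1)[OF mem(2), symmetric])
  finally have "k = k'" .
  moreover have "j = j'"
    using insertion_pred_position(2)[OF mem(1)] insertion_pred_position(2)[OF mem(2)] x \<open>k = k'\<close>
    by simp
  ultimately show "t = t'" using \<open>t = (j, k, i)\<close> \<open>t' = (j', k', i')\<close> \<open>i = i'\<close> by simp
qed

lemma pform_butlast:
  assumes "y \<in> W" "y \<noteq> []"
  shows "pform {} (butlast y) * pmf \<mu> (last y) = pform {} y * Pm (nb (set y))"
proof -
  have y: "y = butlast y @ [last y]" using assms(2) by simp
  have "insert (last y) ({} \<union> set (butlast y)) = set y" by (subst (3) y) auto
  then have "pform {} y = pform {} (butlast y) * pmf \<mu> (last y) / Pm (nb (set y))"
    by (subst y, subst pform_snoc) simp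
  moreover have "last y \<in> V" using assms last_in_set by (fastforce simp: admissible_words_iff)
  then have "Pm (nb (set y)) > 0" using prob_nbh_pos[of "last y" "set y"] assms(2) by simp
  ultimately show ?thesis by simp
qed

lemma sum_pform_insertion_preds:
  assumes "y \<in> W"
  shows "(\<Sum>(j, k, i)\<in>insertion_preds y. pform {} (insert_at k j y) * pmf \<mu> i)
       = pform {} y * (1 - Pm (nb (set y)))"
proof -
  have yV: "set y \<subseteq> V" using assms by (simp add: admissible_words_iff)
  have "(\<Sum>(j, k, i)\<in>insertion_preds y. pform {} (insert_at k j y) * pmf \<mu> i)
      = (\<Sum>j\<in>V - nb (set y). \<Sum>k\<le>length y. \<Sum>i\<in>matchers y j k. pform {} (insert_at k j y) * pmf \<mu> i)"
    unfolding insertion_preds_def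
    by (subst sum.Sigma[symmetric], simp, simp add: matchers_def)+ (simp add: split_def)
  also have "\<dots> = (\<Sum>j\<in>V - nb (set y). \<Sum>k\<le>length y.
      pform {} (insert_at k j y) * match_mass j ({} \<union> set (take k y)))"
    by (simp add: sum_distrib_left[symmetric] sum_pmf_matchers)
  also have "\<dots> = (\<Sum>j\<in>V - nb (set y). pmf \<mu> j * pform {} y)"
    by (intro sum.cong refl, subst sum_pform_insert_at) (use yV in \<open>auto simp: nbh_empty\<close>)
  also have "\<dots> = pform {} y * sum (pmf \<mu>) (V - nb (set y))"
    by (simp add: sum_distrib_left mult.commute)
  also have "\<dots> = pform {} y * (sum (pmf \<mu>) V - sum (pmf \<mu>) (nb (set y)))"
    using sum_diff[OF _ nbh_subset, of "pmf \<mu>" "set y"] by simp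
  finally show ?thesis using sum_pmf_vertices prob_eq_sum_pmf[OF nbh_subset] by simp
qed

lemma fcfm_step_preimage:
  assumes "y \<in> W"
  shows "{xi \<in> adjacent_words y \<times> V. fcfm_step E (fst xi) (snd xi) = y} =
    (if y = [] then {} else {(butlast y, last y)}) \<union>
    (\<lambda>(j, k, i). (insert_at k j y, i)) ` insertion_preds y"
    (is "?P = ?U \<union> ?I")
proof (intro equalityI subsetI)
  fix xi assume P: "xi \<in> ?P"
  obtain x i where xi: "xi = (x, i)" by (cases xi)
  with P have x: "x \<in> W" and i: "i \<in> V" and step: "fcfm_step E x i = y"
    by (auto simp: adjacent_words_def)
  show "xi \<in> ?U \<union> ?I"
  proof (cases rule: fcfm_step_cases[of x E i])
    case 1
    then show ?thesis using step xi by auto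
  next
    case (2 p a s)
    have y: "y = p @ s" using 2 step by simp
    have "(a, length p, i) \<in> insertion_preds y"
      using 2 x i unfolding y
      by (auto simp: insertion_preds_def matchers_def nbh_def admissible_words_iff)
    moreover have "x = insert_at (length p) a y" using 2 unfolding y by (simp add: insert_at_def)
    ultimately show ?thesis using xi by force
  qed
next
  fix xi assume "xi \<in> ?U \<union> ?I"
  then show "xi \<in> ?P"
    using unmatched_pred[OF assms] insertion_pred[OF assms] by (auto split: if_splits)
qed

text \<open>The unmatched predecessor of \<open>y\<close> contributes the fraction \<open>\<mu>(\<E>(y))\<close> of \<open>pform {} y\<close>,
  the predecessors holding one more item that the arrival then matches the remaining
  \<open>1 - \<mu>(\<E>(y))\<close>.\<close>

lemma pform_balance:
  assumes "y \<in> W"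
  shows "(\<Sum>x\<in>adjacent_words y. pform {} x * K x y) = pform {} y"
proof -
  let ?U = "if y = [] then {} else {(butlast y, last y)}"
  let ?g = "\<lambda>(j, k, i). (insert_at k j y, i)"
  have fin: "finite (adjacent_words y \<times> V)" using finite_adjacent_words by simp
  have "butlast y \<noteq> insert_at k j y" if "k \<le> length y" for k j
    using length_insert_at[OF that, of j] by (metis Suc_n_not_le_n diff_le_self length_butlast)
  then have disj: "?U \<inter> ?g ` insertion_preds y = {}"
    by (auto simp: insertion_preds_def)
  have fin_ins: "finite (insertion_preds y)"
    unfolding insertion_preds_def matchers_def by (auto intro!: finite_SigmaI)
  have "(\<Sum>x\<in>adjacent_words y. pform {} x * K x y)
      = (\<Sum>(x, i)\<in>adjacent_words y \<times> V. if fcfm_step E x i = y then pform {} x * pmf \<mu> i else 0)"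
    unfolding trans_prob_def sum_distrib_left sum.cartesian_product by (auto intro!: sum.cong)
  also have "\<dots> = (\<Sum>(x, i)\<in>{xi \<in> adjacent_words y \<times> V. fcfm_step E (fst xi) (snd xi) = y}.
      pform {} x * pmf \<mu> i)"
    by (subst sum.inter_filter[OF fin]) (auto intro!: sum.cong)
  also have "\<dots> = (\<Sum>(x, i)\<in>?U. pform {} x * pmf \<mu> i) +
      (\<Sum>(j, k, i)\<in>insertion_preds y. pform {} (insert_at k j y) * pmf \<mu> i)"
    unfolding fcfm_step_preimage[OF assms]
    by (subst sum.union_disjoint[OF _ _ disj], simp, simp add: fin_ins,
        subst sum.reindex[OF inj_on_insertion_preds]) (simp add: comp_def split_def)
  also have "\<dots> = pform {} y * Pm (nb (set y)) + pform {} y * (1 - Pm (nb (set y)))"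
    using pform_butlast[OF assms] sum_pform_insertion_preds[OF assms] by (simp add: nbh_empty)
  finally show ?thesis by (simp add: algebra_simps)
qed

section \<open>Summability of the product form\<close>

definition indep_words :: "nat set \<Rightarrow> nat \<Rightarrow> nat list set" where
  "indep_words S n = {w. set w \<subseteq> V \<and> length w \<le> n \<and> (\<forall>a\<in>S \<union> set w. \<forall>b\<in>S \<union> set w. \<not> E a b)}"

definition pform_total :: "nat \<Rightarrow> nat set \<Rightarrow> real" where
  "pform_total n S = (\<Sum>w\<in>indep_words S n. pform S w)"

lemma finite_indep_words: "finite (indep_words S n)"
  by (rule finite_subset[OF _ finite_lists_length_le[of V n]]) (auto simp: indep_words_def)

lemma pform_total_eq_0: "\<not> (\<forall>a\<in>S. \<forall>b\<in>S. \<not> E a b) \<Longrightarrow> pform_total n S = 0"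
proof -
  assume "\<not> (\<forall>a\<in>S. \<forall>b\<in>S. \<not> E a b)"
  then have "indep_words S n = {}" by (auto simp: indep_words_def)
  then show ?thesis by (simp add: pform_total_def)
qed

lemma pform_total_nonneg: "pform_total n S \<ge> 0"
  unfolding pform_total_def by (rule sum_nonneg) (simp add: pform_nonneg)

lemma pform_total_0: "\<forall>a\<in>S. \<forall>b\<in>S. \<not> E a b \<Longrightarrow> pform_total 0 S = 1"
proof -
  assume "\<forall>a\<in>S. \<forall>b\<in>S. \<not> E a b"
  then have "indep_words S 0 = {[]}" by (auto simp: indep_words_def)
  then show ?thesis by (simp add: pform_total_def)
qed

lemma indep_words_Suc:
  assumes "\<forall>a\<in>S. \<forall>b\<in>S. \<not> E a b"
  shows "indep_words S (Suc n) =
    insert [] ((\<lambda>(x, w). x # w) ` (SIGMA x:V. indep_words (insert x S) n))"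
proof (intro equalityI subsetI)
  fix w assume w: "w \<in> indep_words S (Suc n)"
  show "w \<in> insert [] ((\<lambda>(x, w). x # w) ` (SIGMA x:V. indep_words (insert x S) n))"
  proof (cases w)
    case (Cons x u)
    then have "(x, u) \<in> (SIGMA x:V. indep_words (insert x S) n)"
      using w by (auto simp: indep_words_def)
    then show ?thesis using Cons by force
  qed simp
qed (use assms in \<open>auto simp: indep_words_def\<close>)

lemma pform_total_Suc:
  assumes "\<forall>a\<in>S. \<forall>b\<in>S. \<not> E a b"
  shows "pform_total (Suc n) S =
    1 + (\<Sum>x\<in>V. pmf \<mu> x / Pm (nb (insert x S)) * pform_total n (insert x S))"
proof -
  have inj: "inj_on (\<lambda>(x, w). x # w) (SIGMA x:V. indep_words (insert x S) n)"
    by (auto simp: inj_on_def)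
  have fin: "finite (SIGMA x:V. indep_words (insert x S) n)" by (auto intro: finite_indep_words)
  have "(\<Sum>w\<in>(\<lambda>(x, w). x # w) ` (SIGMA x:V. indep_words (insert x S) n). pform S w)
      = (\<Sum>(x, w)\<in>(SIGMA x:V. indep_words (insert x S) n). pform S (x # w))"
    by (subst sum.reindex[OF inj]) (simp add: split_def)
  then have "pform_total (Suc n) S =
      1 + (\<Sum>(x, w)\<in>(SIGMA x:V. indep_words (insert x S) n). pform S (x # w))"
    unfolding pform_total_def indep_words_Suc[OF assms] by (subst sum.insert) (use fin in auto)
  also have "\<dots> = 1 + (\<Sum>x\<in>V. \<Sum>w\<in>indep_words (insert x S) n. pform S (x # w))"
    by (subst sum.Sigma) (auto intro: finite_indep_words)
  finally show ?thesis by (simp add: pform_total_def sum_distrib_left)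
qed

lemma pform_total_Suc_le:
  assumes indep: "\<forall>a\<in>S. \<forall>b\<in>S. \<not> E a b" and SV: "S \<subseteq> V"
    and B: "\<And>x. x \<in> V - S \<Longrightarrow> pform_total n (insert x S) \<le> B"
  shows "pform_total (Suc n) S \<le> 1 + Pm S / Pm (nb S) * pform_total n S +
    B * (\<Sum>x\<in>V - S. pmf \<mu> x / Pm (nb (insert x S)))"
proof -
  have sum_S: "(\<Sum>x\<in>S. pmf \<mu> x / Pm (nb (insert x S)) * pform_total n (insert x S))
      = Pm S / Pm (nb S) * pform_total n S"
    unfolding sum_distrib_right sum_divide_distrib prob_eq_sum_pmf[OF SV]
    by (intro sum.cong) (auto simp: insert_absorb)
  have split_V: "V = S \<union> (V - S)" using SV by auto
  have "pform_total (Suc n) S = 1 + Pm S / Pm (nb S) * pform_total n S +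
      (\<Sum>x\<in>V - S. pmf \<mu> x / Pm (nb (insert x S)) * pform_total n (insert x S))"
    unfolding pform_total_Suc[OF indep] sum_S[symmetric]
    by (subst split_V, subst sum.union_disjoint) (auto intro: finite_subset[OF SV])
  also have "(\<Sum>x\<in>V - S. pmf \<mu> x / Pm (nb (insert x S)) * pform_total n (insert x S))
      \<le> (\<Sum>x\<in>V - S. pmf \<mu> x / Pm (nb (insert x S)) * B)"
    by (intro sum_mono mult_left_mono B) auto
  finally show ?thesis by (simp add: sum_distrib_left mult.commute)
qed

lemma pform_total_bounded_by_extensions:
  assumes indep: "\<forall>a\<in>S. \<forall>b\<in>S. \<not> E a b" and SV: "S \<subseteq> V"
    and ratio: "Pm S / Pm (nb S) < 1"
    and B: "\<And>x n. x \<in> V - S \<Longrightarrow> pform_total n (insert x S) \<le> B"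
  shows "pform_total n S \<le>
    (1 + B * (\<Sum>x\<in>V - S. pmf \<mu> x / Pm (nb (insert x S)))) / (1 - Pm S / Pm (nb S))"
proof (rule geometric_recursion_bound)
  show "B * (\<Sum>x\<in>V - S. pmf \<mu> x / Pm (nb (insert x S))) \<ge> 0"
  proof (cases "V - S = {}")
    case True
    then show ?thesis by (simp only: True sum.empty mult_zero_right order_refl)
  next
    case False
    then have "B \<ge> 0" using B pform_total_nonneg order_trans by blast
    then show ?thesis by (simp add: sum_nonneg)
  qed
qed (use pform_total_0[OF indep] pform_total_Suc_le[OF indep SV] B ratio in auto)

lemma pform_total_bounded:
  assumes "\<mu> \<in> Ncond N E" "S \<subseteq> V"
  shows "\<exists>C. \<forall>n. pform_total n S \<le> C"
  using assms(2)
proof (induction S rule: measure_induct_rule[where f="\<lambda>S. card (V - S)"])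
  case (less S)
  show ?case
  proof (cases "\<forall>a\<in>S. \<forall>b\<in>S. \<not> E a b")
    case False
    then show ?thesis using pform_total_eq_0 by (intro exI[of _ 0]) simp
  next
    case indep: True
    have "\<forall>x\<in>V - S. \<exists>C. \<forall>n. pform_total n (insert x S) \<le> C"
    proof
      fix x assume x: "x \<in> V - S"
      have "V - insert x S = (V - S) - {x}" by blast
      also have "card \<dots> < card (V - S)" by (rule card_Diff1_less) (use x in auto)
      finally have "card (V - insert x S) < card (V - S)" .
      then show "\<exists>C. \<forall>n. pform_total n (insert x S) \<le> C" using less x by blast
    qed
    then obtain B where B: "\<forall>x\<in>V - S. \<forall>n. pform_total n (insert x S) \<le> B"
      using finite_uniform_bound[of "V - S" "\<lambda>x n. pform_total n (insert x S)"] by auto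
    have "Pm S / Pm (nb S) < 1"
    proof (cases "S = {}")
      case False
      then have "S \<in> indep_sets N E" using indep less.prems by (auto simp: indep_sets_def)
      then have "Pm S < Pm (nb S)" using assms(1) by (auto simp: Ncond_def)
      then show ?thesis by (simp add: divide_less_eq)
    qed simp
    with B have "pform_total n S \<le> (1 + B * (\<Sum>x\<in>V - S. pmf \<mu> x / Pm (nb (insert x S))))
        / (1 - Pm S / Pm (nb S))" for n
      by (intro pform_total_bounded_by_extensions[OF indep less.prems]) auto
    then show ?thesis by blast
  qed
qed

lemma Ncond_imp_pform_summable_on:
  assumes "\<mu> \<in> Ncond N E"
  shows "pform {} summable_on W"
proof -
  obtain C where C: "\<And>n. pform_total n {} \<le> C" using pform_total_bounded[OF assms, of "{}"] by auto
  have "sum (pform {}) F \<le> C" if F: "finite F" "F \<subseteq> W" for F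
  proof -
    define L where "L = (\<Sum>w\<in>F. length w)"
    have "length w \<le> L" if "w \<in> F" for w
      unfolding L_def by (rule member_le_sum) (use that F in auto)
    moreover have "set w \<subseteq> V \<and> (\<forall>a\<in>set w. \<forall>b\<in>set w. \<not> E a b)" if "w \<in> F" for w
      using that F admissible_words_iff by blast
    ultimately have "F \<subseteq> indep_words {} L" by (auto simp: indep_words_def)
    then have "sum (pform {}) F \<le> pform_total L {}"
      unfolding pform_total_def by (intro sum_mono2 finite_indep_words) (auto simp: pform_nonneg)
    also have "\<dots> \<le> C" by (rule C)
    finally show ?thesis .
  qed
  then show ?thesis
    by (intro nonneg_bounded_partial_sums_imp_summable_on[where C=C])
      (auto simp: pform_nonneg intro!: eventually_finite_subsets_at_top_weakI)
qed

lemma sum_pform_lists_length: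
  assumes "I \<subseteq> V"
  shows "(\<Sum>u\<in>{u. set u \<subseteq> I \<and> length u = n}. pform I u) = (Pm I / Pm (nb I)) ^ n"
proof -
  have fin: "finite I" using assms finite_subset by blast
  have "(\<Sum>u\<in>{u. set u \<subseteq> I \<and> length u = n}. pform I u)
      = (\<Sum>u\<in>{u. set u \<subseteq> I \<and> length u = n}. prod_list (map (pmf \<mu>) u)) / Pm (nb I) ^ n"
    unfolding sum_divide_distrib by (intro sum.cong refl) (auto simp: pform_const)
  then show ?thesis
    using sum_prod_list_lists_length[OF fin] prob_eq_sum_pmf[OF assms] by (simp add: power_divide)
qed

text \<open>If \<open>\<mu>(I) \<ge> \<mu>(\<E>(I))\<close>, the words over \<open>I\<close> of each length already carry weight at least
  \<open>pform {} p\<close> for a fixed prefix \<open>p\<close> enumerating \<open>I\<close>.\<close>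

lemma pform_unbounded_if_unstable:
  assumes I: "I \<in> indep_sets N E" and ge: "Pm (nb I) \<le> Pm I" and p: "set p = I"
  obtains F where "finite F" "F \<subseteq> W" "pform {} p * (real M + 1) \<le> sum (pform {}) F"
proof
  have IV: "I \<subseteq> V" and "I \<noteq> {}" and Iind: "\<forall>u\<in>I. \<forall>v\<in>I. \<not> E u v"
    using I by (auto simp: indep_sets_def)
  then have "Pm (nb I) > 0" using prob_nbh_pos by blast
  then have \<rho>: "Pm I / Pm (nb I) \<ge> 1" using ge by simp
  define G where "G = (\<Union>n\<le>M. {u. set u \<subseteq> I \<and> length u = n})"
  show "finite ((@) p ` G)"
    unfolding G_def using IV by (auto intro!: finite_lists_length_eq intro: finite_subset)
  show "(@) p ` G \<subseteq> W"
  proof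
    fix w assume "w \<in> (@) p ` G"
    then have "set w \<subseteq> I" using p by (auto simp: G_def)
    then show "w \<in> W" unfolding admissible_words_iff using IV Iind by blast
  qed
  have "real M + 1 = (\<Sum>n\<le>M. (1::real))" by simp
  also have "\<dots> \<le> (\<Sum>n\<le>M. (Pm I / Pm (nb I)) ^ n)"
    by (intro sum_mono one_le_power \<rho>)
  also have "\<dots> = (\<Sum>u\<in>G. pform I u)"
    unfolding G_def using IV
    by (subst sum.UNION_disjoint) (auto intro!: finite_lists_length_eq intro: finite_subset
        simp: sum_pform_lists_length)
  finally have "pform {} p * (real M + 1) \<le> pform {} p * (\<Sum>u\<in>G. pform I u)"
    using pform_nonneg by (simp add: mult_left_mono)
  also have "\<dots> = sum (pform {}) ((@) p ` G)"
    using p by (simp add: pform_append sum_distrib_left sum.reindex inj_on_def)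
  finally show "pform {} p * (real M + 1) \<le> sum (pform {}) ((@) p ` G)" .
qed

lemma pform_summable_on_imp_Ncond:
  assumes summable: "pform {} summable_on W"
  shows "\<mu> \<in> Ncond N E"
proof (rule ccontr)
  assume "\<mu> \<notin> Ncond N E"
  then obtain I where I: "I \<in> indep_sets N E" and ge: "Pm (nb I) \<le> Pm I"
    using support by (force simp: Ncond_def)
  then have IV: "I \<subseteq> V" by (simp add: indep_sets_def)
  obtain p where p: "set p = I" using IV finite_list finite_subset by blast
  have p_pos: "pform {} p > 0" using pform_pos p IV by simp
  obtain M :: nat where M: "real M > infsum (pform {}) W / pform {} p"
    using reals_Archimedean2 by blast
  obtain F where F: "finite F" "F \<subseteq> W" and lower: "pform {} p * (real M + 1) \<le> sum (pform {}) F"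
    using pform_unbounded_if_unstable[OF I ge p] .
  note lower
  also have "sum (pform {}) F \<le> infsum (pform {}) W"
    using finite_sum_le_infsum[OF summable F] pform_nonneg by blast
  finally show False using M p_pos by (simp add: divide_less_eq algebra_simps)
qed

section \<open>Excursions from the empty word\<close>

definition arrival_seqs :: "nat \<Rightarrow> nat list set" where
  "arrival_seqs n = {vs. length vs = n \<and> set vs \<subseteq> V}"

definition seq_prob :: "nat list \<Rightarrow> real" where
  "seq_prob vs = prod_list (map (pmf \<mu>) vs)"

definition avoids_empty :: "nat list \<Rightarrow> bool" where
  "avoids_empty vs \<longleftrightarrow> (\<forall>k. 0 < k \<and> k \<le> length vs \<longrightarrow> queue_after E (take k vs) \<noteq> [])"

text \<open>\<open>taboo_prob n y\<close> is the probability that \<open>W\<^sub>n = y\<close> and \<open>W\<^sub>k \<noteq> \<emptyset>\<close> for \<open>0 < k \<le> n\<close>;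
  \<open>tail_prob n\<close> is the probability that the return time to \<open>\<emptyset>\<close> exceeds \<open>n\<close>.\<close>

definition taboo_prob :: "nat \<Rightarrow> nat list \<Rightarrow> real" where
  "taboo_prob n y =
     (\<Sum>vs\<in>arrival_seqs n. if queue_after E vs = y \<and> avoids_empty vs then seq_prob vs else 0)"

definition tail_prob :: "nat \<Rightarrow> real" where
  "tail_prob n = (\<Sum>vs\<in>arrival_seqs n. if avoids_empty vs then seq_prob vs else 0)"

definition taboo_next :: "nat \<Rightarrow> nat list \<Rightarrow> real" where
  "taboo_next n y = (\<Sum>vs\<in>arrival_seqs n. \<Sum>v\<in>V.
     if avoids_empty vs \<and> fcfm_step E (queue_after E vs) v = y then seq_prob vs * pmf \<mu> v else 0)"

lemma arrival_seqs_0: "arrival_seqs 0 = {[]}"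
  by (auto simp: arrival_seqs_def)

lemma sum_arrival_seqs_Suc:
  "(\<Sum>ws\<in>arrival_seqs (Suc n). h ws) = (\<Sum>vs\<in>arrival_seqs n. \<Sum>v\<in>V. h (vs @ [v]))"
proof -
  have "arrival_seqs (Suc n) = (\<lambda>(vs, v). vs @ [v]) ` (arrival_seqs n \<times> V)"
  proof (intro equalityI subsetI)
    fix ws assume ws: "ws \<in> arrival_seqs (Suc n)"
    then have ne: "ws \<noteq> []" by (auto simp: arrival_seqs_def)
    then have "ws = butlast ws @ [last ws]" by simp
    moreover have "butlast ws \<in> arrival_seqs n"
      using ws by (auto simp: arrival_seqs_def dest: in_set_butlastD)
    moreover have "last ws \<in> V" using ws ne last_in_set unfolding arrival_seqs_def by blast
    ultimately show "ws \<in> (\<lambda>(vs, v). vs @ [v]) ` (arrival_seqs n \<times> V)" by force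
  qed (auto simp: arrival_seqs_def)
  moreover have "inj_on (\<lambda>(vs, v). vs @ [v]) (arrival_seqs n \<times> V)" by (auto simp: inj_on_def)
  ultimately show ?thesis by (simp add: sum.reindex sum.cartesian_product split_def)
qed

lemma seq_prob_snoc: "seq_prob (vs @ [v]) = seq_prob vs * pmf \<mu> v"
  by (simp add: seq_prob_def)

lemma seq_prob_nonneg: "seq_prob vs \<ge> 0"
  unfolding seq_prob_def by (induction vs) auto

lemma queue_after_admissible: "set vs \<subseteq> V \<Longrightarrow> queue_after E vs \<in> W"
proof (induction vs rule: rev_induct)
  case Nil
  then show ?case by (simp add: queue_after_Nil admissible_words_iff)
next
  case (snoc x xs)
  then show ?case by (simp add: queue_after_snoc fcfm_step_admissible)
qed

lemma avoids_empty_Nil: "avoids_empty []"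
  by (simp add: avoids_empty_def)

lemma avoids_empty_snoc:
  "avoids_empty (vs @ [v]) \<longleftrightarrow> avoids_empty vs \<and> queue_after E (vs @ [v]) \<noteq> []"
  unfolding avoids_empty_def
  by (auto simp: le_Suc_eq)

lemma taboo_prob_nonneg: "taboo_prob n y \<ge> 0"
  unfolding taboo_prob_def by (rule sum_nonneg) (simp add: seq_prob_nonneg)

lemma tail_prob_nonneg: "tail_prob n \<ge> 0"
  unfolding tail_prob_def by (rule sum_nonneg) (simp add: seq_prob_nonneg)

lemma taboo_next_nonneg: "taboo_next n y \<ge> 0"
  unfolding taboo_next_def by (intro sum_nonneg) (simp add: seq_prob_nonneg)

lemma taboo_prob_0: "taboo_prob 0 y = (if y = [] then 1 else 0)"
  by (simp add: taboo_prob_def arrival_seqs_0 queue_after_Nil avoids_empty_Nil seq_prob_def)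

lemma tail_prob_0: "tail_prob 0 = 1"
  by (simp add: tail_prob_def arrival_seqs_0 avoids_empty_Nil seq_prob_def)

lemma taboo_prob_Suc: "taboo_prob (Suc n) y = (if y = [] then 0 else taboo_next n y)"
  unfolding taboo_prob_def taboo_next_def sum_arrival_seqs_Suc avoids_empty_snoc queue_after_snoc
    seq_prob_snoc
  by (auto intro!: sum.cong sum.neutral)

lemma first_return_prob_Suc: "first_return_prob N E \<mu> (Suc n) = taboo_next n []"
proof -
  have "first_return_prob N E \<mu> (Suc n) = (\<Sum>ws\<in>arrival_seqs (Suc n).
      if queue_after E ws = [] \<and> (\<forall>k. 0 < k \<and> k < Suc n \<longrightarrow> queue_after E (take k ws) \<noteq> [])
      then seq_prob ws else 0)"
    unfolding first_return_prob_def arrival_seqs_def seq_prob_def by simp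
  also have "\<dots> = taboo_next n []"
    unfolding sum_arrival_seqs_Suc taboo_next_def
  proof (intro sum.cong refl)
    fix vs v assume "vs \<in> arrival_seqs n"
    then have "(\<forall>k. 0 < k \<and> k < Suc n \<longrightarrow> queue_after E (take k (vs @ [v])) \<noteq> []) \<longleftrightarrow> avoids_empty vs"
      unfolding avoids_empty_def arrival_seqs_def by auto
    then show "(if queue_after E (vs @ [v]) = [] \<and>
          (\<forall>k. 0 < k \<and> k < Suc n \<longrightarrow> queue_after E (take k (vs @ [v])) \<noteq> [])
        then seq_prob (vs @ [v]) else 0) =
      (if avoids_empty vs \<and> fcfm_step E (queue_after E vs) v = []
       then seq_prob vs * pmf \<mu> v else 0)"
      by (simp add: queue_after_snoc seq_prob_snoc conj_commute)
  qed
  finally show ?thesis .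
qed

lemma tail_prob_Suc: "tail_prob n = tail_prob (Suc n) + taboo_next n []"
proof -
  have "tail_prob (Suc n) + taboo_next n []
      = (\<Sum>vs\<in>arrival_seqs n. \<Sum>v\<in>V. if avoids_empty vs then seq_prob vs * pmf \<mu> v else 0)"
    unfolding tail_prob_def taboo_next_def sum_arrival_seqs_Suc avoids_empty_snoc queue_after_snoc
      seq_prob_snoc
    by (simp add: sum.distrib[symmetric]) (auto intro!: sum.cong)
  also have "\<dots> = (\<Sum>vs\<in>arrival_seqs n. if avoids_empty vs then seq_prob vs * (\<Sum>v\<in>V. pmf \<mu> v) else 0)"
    by (intro sum.cong refl) (simp add: sum_distrib_left)
  also have "\<dots> = tail_prob n" by (simp only: sum_pmf_vertices mult_1_right tail_prob_def)
  finally show ?thesis by simp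
qed

lemma positive_recurrent_iff_summable_tail: "positive_recurrent N E \<mu> \<longleftrightarrow> summable tail_prob"
proof -
  interpret return_time_tails tail_prob "first_return_prob N E \<mu>"
  proof
    show "tail_prob n = tail_prob (Suc n) + first_return_prob N E \<mu> (Suc n)" for n
      unfolding first_return_prob_Suc by (rule tail_prob_Suc)
  qed (simp_all add: tail_prob_0 tail_prob_nonneg first_return_prob_Suc taboo_next_nonneg)
  show ?thesis unfolding positive_recurrent_def by (rule finite_mean_iff_summable)
qed

lemma taboo_next_eq_sum:
  assumes "y \<in> W"
  shows "taboo_next n y = (\<Sum>x\<in>adjacent_words y. taboo_prob n x * K x y)"
proof -
  have "(\<Sum>x\<in>adjacent_words y. taboo_prob n x * K x y) = (\<Sum>x\<in>adjacent_words y. \<Sum>vs\<in>arrival_seqs n.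
      if queue_after E vs = x \<and> avoids_empty vs then seq_prob vs * K (queue_after E vs) y else 0)"
    unfolding taboo_prob_def sum_distrib_right by (intro sum.cong refl) auto
  also have "\<dots> = (\<Sum>vs\<in>arrival_seqs n.
      if queue_after E vs \<in> adjacent_words y \<and> avoids_empty vs
      then seq_prob vs * K (queue_after E vs) y else 0)"
    by (subst sum.swap) (simp add: sum_if_eq_conj finite_adjacent_words)
  also have "\<dots> =
      (\<Sum>vs\<in>arrival_seqs n. if avoids_empty vs then seq_prob vs * K (queue_after E vs) y else 0)"
  proof (intro sum.cong refl)
    fix vs assume "vs \<in> arrival_seqs n"
    then have "queue_after E vs \<in> W" using queue_after_admissible by (simp add: arrival_seqs_def)
    then show "(if queue_after E vs \<in> adjacent_words y \<and> avoids_empty vs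
          then seq_prob vs * K (queue_after E vs) y else 0) =
        (if avoids_empty vs then seq_prob vs * K (queue_after E vs) y else 0)"
      using trans_prob_eq_0 by auto
  qed
  also have "\<dots> = taboo_next n y"
    unfolding taboo_next_def trans_prob_def sum_distrib_left by (auto intro!: sum.cong)
  finally show ?thesis by simp
qed

lemma sum_taboo_prob:
  "finite Y \<Longrightarrow> (\<Sum>y\<in>Y. taboo_prob n y) =
     (\<Sum>vs\<in>arrival_seqs n. if queue_after E vs \<in> Y \<and> avoids_empty vs then seq_prob vs else 0)"
  unfolding taboo_prob_def by (subst sum.swap) (simp add: sum_if_eq_conj)

lemma sum_taboo_prob_le_tail_prob: "finite Y \<Longrightarrow> (\<Sum>y\<in>Y. taboo_prob n y) \<le> tail_prob n"
  unfolding sum_taboo_prob tail_prob_def by (intro sum_mono) (simp add: seq_prob_nonneg)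

lemma sum_taboo_prob_short_words:
  assumes "n \<le> M"
  shows "(\<Sum>y\<in>{y \<in> W. length y \<le> M}. taboo_prob n y) = tail_prob n"
  unfolding sum_taboo_prob[OF finite_admissible_words_length_le] tail_prob_def
proof (intro sum.cong refl)
  fix vs assume "vs \<in> arrival_seqs n"
  then have "queue_after E vs \<in> {y \<in> W. length y \<le> M}"
    using assms queue_after_admissible length_queue_after_le[of E vs]
    by (auto simp: arrival_seqs_def)
  then show "(if queue_after E vs \<in> {y \<in> W. length y \<le> M} \<and> avoids_empty vs then seq_prob vs else 0)
      = (if avoids_empty vs then seq_prob vs else 0)" by simp
qed

definition invariant :: "(nat list \<Rightarrow> real) \<Rightarrow> bool" where
  "invariant q \<longleftrightarrow> (\<forall>y\<in>W. q y = (\<Sum>x\<in>adjacent_words y. q x * K x y))"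

lemma pform_invariant: "invariant (pform {})"
  unfolding invariant_def using pform_balance by simp

lemma sum_taboo_prob_le_invariant:
  assumes nonneg: "\<And>y. y \<in> W \<Longrightarrow> q y \<ge> 0" and Nil: "q [] = 1" and inv: "invariant q"
  shows "y \<in> W \<Longrightarrow> (\<Sum>n\<le>M. taboo_prob n y) \<le> q y"
proof (induction M arbitrary: y)
  case 0
  then show ?case using nonneg[of y] Nil by (simp add: taboo_prob_0)
next
  case (Suc M)
  show ?case
  proof (cases "y = []")
    case True
    then show ?thesis
      using Nil by (simp add: sum.atMost_Suc_shift taboo_prob_0 taboo_prob_Suc del: sum.atMost_Suc)
  next
    case False
    have "(\<Sum>n\<le>Suc M. taboo_prob n y) = (\<Sum>n\<le>M. \<Sum>x\<in>adjacent_words y. taboo_prob n x * K x y)"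
      using False by (simp add: sum.atMost_Suc_shift taboo_prob_0 taboo_prob_Suc
          taboo_next_eq_sum[OF Suc.prems] del: sum.atMost_Suc)
    also have "\<dots> = (\<Sum>x\<in>adjacent_words y. (\<Sum>n\<le>M. taboo_prob n x) * K x y)"
      by (subst sum.swap) (simp add: sum_distrib_right)
    also have "\<dots> \<le> (\<Sum>x\<in>adjacent_words y. q x * K x y)"
      by (intro sum_mono mult_right_mono trans_prob_nonneg Suc.IH) (simp add: adjacent_words_def)
    also have "\<dots> = q y" using inv Suc.prems unfolding invariant_def by simp
    finally show ?thesis .
  qed
qed

lemma sum_tail_prob_le_invariant:
  assumes "\<And>y. y \<in> W \<Longrightarrow> q y \<ge> 0" "q [] = 1" "invariant q"
  shows "(\<Sum>n\<le>M. tail_prob n) \<le> (\<Sum>y\<in>{y \<in> W. length y \<le> M}. q y)"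
proof -
  have "(\<Sum>n\<le>M. tail_prob n) = (\<Sum>y\<in>{y \<in> W. length y \<le> M}. \<Sum>n\<le>M. taboo_prob n y)"
    by (subst sum.swap) (simp add: sum_taboo_prob_short_words)
  also have "\<dots> \<le> (\<Sum>y\<in>{y \<in> W. length y \<le> M}. q y)"
    by (intro sum_mono sum_taboo_prob_le_invariant[OF assms]) auto
  finally show ?thesis .
qed

text \<open>From every nonempty word the chain can step to its tail.\<close>

lemma invariant_eq_0:
  assumes nonneg: "\<And>y. y \<in> W \<Longrightarrow> q y \<ge> 0" and Nil: "q [] = 0" and inv: "invariant q"
  shows "x \<in> W \<Longrightarrow> q x = 0"
proof (induction x)
  case (Cons a x)
  have xW: "x \<in> W" using Cons.prems by (simp add: admissible_words_iff)
  have "a # x \<in> adjacent_words x" using Cons.prems by (simp add: adjacent_words_def)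
  then have "q (a # x) * K (a # x) x \<le> (\<Sum>z\<in>adjacent_words x. q z * K z x)"
    by (rule member_le_sum[OF _ _ finite_adjacent_words])
      (use nonneg trans_prob_nonneg in \<open>auto simp: adjacent_words_def\<close>)
  also have "\<dots> = 0" using inv xW Cons.IH[OF xW] unfolding invariant_def by simp
  finally show ?case
    using trans_prob_Cons_pos[OF Cons.prems] nonneg[OF Cons.prems] by (simp add: mult_le_0_iff)
qed (use Nil in simp)

definition excursion_measure :: "nat list \<Rightarrow> real" where
  "excursion_measure y = (\<Sum>n. taboo_prob n y)"

lemma summable_taboo_prob:
  assumes "summable tail_prob"
  shows "summable (\<lambda>n. taboo_prob n y)"
proof (rule summable_comparison_test'[OF assms])
  fix n show "norm (taboo_prob n y) \<le> tail_prob n"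
    using sum_taboo_prob_le_tail_prob[of "{y}" n] taboo_prob_nonneg[of n y] by simp
qed

lemma excursion_measure_eq:
  assumes "summable tail_prob"
  shows "excursion_measure y = (if y = [] then 1 else (\<Sum>n. taboo_next n y))"
proof -
  have "(\<Sum>n. taboo_prob (Suc n) y) = excursion_measure y - taboo_prob 0 y"
    unfolding excursion_measure_def by (rule suminf_split_head[OF summable_taboo_prob[OF assms]])
  then show ?thesis by (simp add: taboo_prob_0 taboo_prob_Suc split: if_splits)
qed

lemma excursion_measure_le_invariant:
  assumes "summable tail_prob"
    and "\<And>y. y \<in> W \<Longrightarrow> q y \<ge> 0" "q [] = 1" "invariant q" "y \<in> W"
  shows "excursion_measure y \<le> q y"
  unfolding excursion_measure_def
proof (rule suminf_le_const[OF summable_taboo_prob[OF assms(1)]])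
  fix n
  have "(\<Sum>k<n. taboo_prob k y) \<le> (\<Sum>k\<le>n. taboo_prob k y)"
    by (rule sum_mono2) (auto simp: taboo_prob_nonneg)
  also have "\<dots> \<le> q y" by (rule sum_taboo_prob_le_invariant[OF assms(2-5)])
  finally show "(\<Sum>k<n. taboo_prob k y) \<le> q y" .
qed

text \<open>Invariance at \<open>\<emptyset>\<close> is where recurrence enters: the first return probabilities
  \<open>taboo_next n []\<close> sum to \<open>1\<close>.\<close>

lemma excursion_measure_invariant:
  assumes "summable tail_prob"
  shows "invariant excursion_measure"
  unfolding invariant_def
proof
  fix y assume y: "y \<in> W"
  have "(\<lambda>n. taboo_next n []) sums 1"
    using assms positive_recurrent_iff_summable_tail
    unfolding positive_recurrent_def by (simp add: first_return_prob_Suc)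
  then have em: "(\<Sum>n. taboo_next n y) = excursion_measure y"
    using excursion_measure_eq[OF assms] by (simp add: sums_iff)
  have "(\<Sum>x\<in>adjacent_words y. excursion_measure x * K x y)
      = (\<Sum>x\<in>adjacent_words y. \<Sum>n. taboo_prob n x * K x y)"
    unfolding excursion_measure_def by (intro sum.cong refl suminf_mult2 summable_taboo_prob assms)
  also have "\<dots> = (\<Sum>n. \<Sum>x\<in>adjacent_words y. taboo_prob n x * K x y)"
    by (rule suminf_sum[symmetric]) (intro summable_mult2 summable_taboo_prob assms)
  also have "\<dots> = excursion_measure y" using em by (simp add: taboo_next_eq_sum[OF y])
  finally show "excursion_measure y = (\<Sum>x\<in>adjacent_words y. excursion_measure x * K x y)" ..
qed

lemma invariant_eq_excursion_measure:
  assumes "summable tail_prob"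
    and nonneg: "\<And>y. y \<in> W \<Longrightarrow> q y \<ge> 0" and Nil: "q [] = 1" and inv: "invariant q"
    and "y \<in> W"
  shows "q y = excursion_measure y"
proof -
  define d where "d y = q y - excursion_measure y" for y
  have "invariant d"
    unfolding invariant_def
  proof
    fix y assume y: "y \<in> W"
    have "(\<Sum>x\<in>adjacent_words y. d x * K x y)
        = (\<Sum>x\<in>adjacent_words y. q x * K x y) - (\<Sum>x\<in>adjacent_words y. excursion_measure x * K x y)"
      unfolding d_def by (simp add: left_diff_distrib sum_subtractf)
    then show "d y = (\<Sum>x\<in>adjacent_words y. d x * K x y)"
      using inv excursion_measure_invariant[OF assms(1)] y unfolding invariant_def d_def by simp
  qed
  moreover have "\<And>y. y \<in> W \<Longrightarrow> d y \<ge> 0"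
    unfolding d_def using excursion_measure_le_invariant[OF assms(1) nonneg Nil inv] by simp
  moreover have "d [] = 0" unfolding d_def using Nil excursion_measure_eq[OF assms(1)] by simp
  ultimately have "d y = 0" using invariant_eq_0 assms(5) by blast
  then show ?thesis unfolding d_def by simp
qed

lemma pform_eq_excursion_measure: "summable tail_prob \<Longrightarrow> y \<in> W \<Longrightarrow> pform {} y = excursion_measure y"
  by (rule invariant_eq_excursion_measure) (simp_all add: pform_nonneg pform_invariant)

lemma summable_tail_iff_pform_summable_on: "summable tail_prob \<longleftrightarrow> pform {} summable_on W"
proof
  assume tail: "summable tail_prob"
  have "sum (pform {}) F \<le> suminf tail_prob" if F: "finite F" "F \<subseteq> W" for F
  proof -
    have "sum (pform {}) F = (\<Sum>y\<in>F. \<Sum>n. taboo_prob n y)"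
      using F pform_eq_excursion_measure[OF tail]
      by (intro sum.cong refl) (auto simp: excursion_measure_def)
    also have "\<dots> = (\<Sum>n. \<Sum>y\<in>F. taboo_prob n y)"
      by (rule suminf_sum[symmetric]) (rule summable_taboo_prob[OF tail])
    also have "\<dots> \<le> suminf tail_prob"
      by (rule suminf_le)
        (use F tail in \<open>auto intro: sum_taboo_prob_le_tail_prob summable_sum summable_taboo_prob\<close>)
    finally show ?thesis .
  qed
  then show "pform {} summable_on W"
    by (intro nonneg_bounded_partial_sums_imp_summable_on[where C="suminf tail_prob"])
      (auto simp: pform_nonneg intro!: eventually_finite_subsets_at_top_weakI)
next
  assume summable: "pform {} summable_on W"
  show "summable tail_prob"
  proof (rule bounded_imp_summable[where B="infsum (pform {}) W"])
    fix M
    have "sum tail_prob {..M} \<le> (\<Sum>y\<in>{y \<in> W. length y \<le> M}. pform {} y)"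
      by (rule sum_tail_prob_le_invariant) (simp_all add: pform_nonneg pform_invariant)
    also have "\<dots> \<le> infsum (pform {}) W"
      by (rule finite_sum_le_infsum[OF summable])
        (auto simp: finite_admissible_words_length_le pform_nonneg)
    finally show "sum tail_prob {..M} \<le> infsum (pform {}) W" .
  qed (rule tail_prob_nonneg)
qed

lemma positive_recurrent_iff_Ncond: "positive_recurrent N E \<mu> \<longleftrightarrow> \<mu> \<in> Ncond N E"
  using positive_recurrent_iff_summable_tail summable_tail_iff_pform_summable_on
    Ncond_imp_pform_summable_on pform_summable_on_imp_Ncond by blast

lemma stationary_prob_iff:
  "stationary_prob N E \<mu> p \<longleftrightarrow> (\<forall>w\<in>W. p w \<ge> 0) \<and> (p has_sum 1) W \<and> invariant p"
proof -
  have "((\<lambda>w. p w * K w y) has_sum p y) W \<longleftrightarrow> p y = (\<Sum>x\<in>adjacent_words y. p x * K x y)"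
    if "y \<in> W" for y
  proof -
    have "((\<lambda>w. p w * K w y) has_sum p y) W \<longleftrightarrow> ((\<lambda>w. p w * K w y) has_sum p y) (adjacent_words y)"
      by (rule has_sum_cong_neutral) (auto simp: adjacent_words_def trans_prob_eq_0)
    then show ?thesis by (simp add: has_sum_finite_iff[OF finite_adjacent_words])
  qed
  then show ?thesis unfolding stationary_prob_def invariant_def by auto
qed

lemma infsum_pform_ge_1:
  assumes "pform {} summable_on W"
  shows "infsum (pform {}) W \<ge> 1"
  using finite_sum_le_infsum[OF assms, of "{[]}"] by (simp add: admissible_words_iff pform_nonneg)

lemma stationary_prob_Pi_W:
  assumes "pform {} summable_on W"
  shows "stationary_prob N E \<mu> (Pi_W N E \<mu> (1 / infsum (pform {}) W))"
proof -
  let ?\<alpha> = "1 / infsum (pform {}) W"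
  have \<alpha>: "?\<alpha> > 0" using infsum_pform_ge_1[OF assms] by simp
  have "((\<lambda>w. ?\<alpha> * pform {} w) has_sum ?\<alpha> * infsum (pform {}) W) W"
    by (rule has_sum_cmult_right[OF has_sum_infsum[OF assms]])
  moreover have "invariant (\<lambda>w. ?\<alpha> * pform {} w)"
    using pform_invariant unfolding invariant_def by (simp add: sum_distrib_left mult.assoc)
  ultimately show ?thesis
    unfolding stationary_prob_iff Pi_W_eq_pform
    using \<alpha> infsum_pform_ge_1[OF assms] by (simp add: pform_nonneg)
qed

lemma stationary_prob_eq_Pi_W:
  assumes tail: "summable tail_prob" and p: "stationary_prob N E \<mu> p" and w: "w \<in> W"
  shows "p w = Pi_W N E \<mu> (1 / infsum (pform {}) W) w"
proof -
  have nonneg: "\<And>y. y \<in> W \<Longrightarrow> p y \<ge> 0" and total: "(p has_sum 1) W" and inv: "invariant p"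
    using p unfolding stationary_prob_iff by auto
  have Nil: "[] \<in> W" by (simp add: admissible_words_iff)
  have "p [] \<noteq> 0"
  proof
    assume "p [] = 0"
    then have "(p has_sum 0) W" using invariant_eq_0[OF nonneg _ inv] by (intro has_sum_0) blast
    then have "(0::real) = 1" by (rule has_sum_unique[OF _ total])
    then show False by simp
  qed
  then have pos: "p [] > 0" using nonneg[OF Nil] by simp
  have "p y / p [] = pform {} y" if "y \<in> W" for y
  proof (rule invariant_eq_excursion_measure[OF tail _ _ _ that, THEN trans])
    show "invariant (\<lambda>y. p y / p [])"
      using inv unfolding invariant_def by (simp add: sum_divide_distrib)
  qed (use nonneg pos pform_eq_excursion_measure[OF tail that] in auto)
  then have p_eq: "p y = p [] * pform {} y" if "y \<in> W" for y
    using pos that by (simp add: field_simps)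
  have summable: "pform {} summable_on W" using tail summable_tail_iff_pform_summable_on by blast
  have "((\<lambda>y. p [] * pform {} y) has_sum 1) W"
    using total p_eq by (subst has_sum_cong[symmetric]) auto
  then have "p [] * infsum (pform {}) W = 1"
    using has_sum_cmult_right[OF has_sum_infsum[OF summable], of "p []"] has_sum_unique by blast
  then show ?thesis
    using p_eq[OF w] infsum_pform_ge_1[OF summable] by (simp add: Pi_W_eq_pform field_simps)
qed

theorem Ncond_imp_unique_stationary_prob:
  assumes "\<mu> \<in> Ncond N E"
  shows "\<exists>\<alpha>>0. stationary_prob N E \<mu> (Pi_W N E \<mu> \<alpha>) \<and>
    (\<forall>p. stationary_prob N E \<mu> p \<longrightarrow> (\<forall>w\<in>W. p w = Pi_W N E \<mu> \<alpha> w))"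
proof -
  have summable: "pform {} summable_on W" by (rule Ncond_imp_pform_summable_on[OF assms])
  then have "summable tail_prob" using summable_tail_iff_pform_summable_on by blast
  then show ?thesis
    using stationary_prob_Pi_W[OF summable] stationary_prob_eq_Pi_W infsum_pform_ge_1[OF summable]
    by (intro exI[of _ "1 / infsum (pform {}) W"]) auto
qed

end

theorem theorem1:
  fixes N :: nat and E :: "nat \<Rightarrow> nat \<Rightarrow> bool" and \<mu> :: "nat pmf"
  assumes "simple_graph N E"
    and "connected_graph N E"
    and "\<not> bipartite N E"
    and "set_pmf \<mu> = {1..N}"
  shows "(positive_recurrent N E \<mu> \<longleftrightarrow> \<mu> \<in> Ncond N E) \<and>
         (\<mu> \<in> Ncond N E \<longrightarrow>
            (\<exists>\<alpha>>0. stationary_prob N E \<mu> (Pi_W N E \<mu> \<alpha>) \<and>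
               (\<forall>p. stationary_prob N E \<mu> p \<longrightarrow>
                    (\<forall>w \<in> admissible_words N E. p w = Pi_W N E \<mu> \<alpha> w))))"
proof -
  \<comment> \<open>Connectedness and non-bipartiteness only serve to exclude isolated vertices.\<close>
  interpret fcfm_model N E \<mu>
    using assms no_isolated_vertex by unfold_locales blast+
  show ?thesis using positive_recurrent_iff_Ncond Ncond_imp_unique_stationary_prob by blast
qed

end
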